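(* Let $P\subset\mathbb C$ be a convex polygon having two edges parallel to the real axis, each of length $1$. Let $t_1<t_2<\cdots<t_m$ be real numbers. Then $$\max_{i=1,\dots,m-1}(t_{i+1}-t_i)\leq 1$$ if and only if $\bigcup_{i=1}^m (P+t_i)$ is a convex set.
   Context: $\mathbb C$ is identified with $\mathbb R^2$. For $t\in\mathbb C$, $P+t=\{x+t\mid x\in P\}$. A polygon may degenerate to a segment (regarded as having two overlapping edges). *)

theory Defs
  imports "HOL-Analysis.Analysis"
begin

text \<open>A convex polygon in the complex plane: a polytope (convex hull of finitely many
points) of affine dimension 1 or 2; dimension 1 is the degenerate (segment) case.\<close>
definition convex_polygon :: "complex set \<Rightarrow> bool" where
  "convex_polygon P \<longleftrightarrow> polytope P \<and> aff_dim P \<ge> 1"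

definition is_edge_of :: "complex set \<Rightarrow> complex set \<Rightarrow> bool" where
  "is_edge_of E P \<longleftrightarrow> E face_of P \<and> aff_dim E = 1"

definition horizontal_unit_segment :: "complex set \<Rightarrow> bool" where
  "horizontal_unit_segment E \<longleftrightarrow> (\<exists>a. E = closed_segment a (a + 1))"

text \<open>P has two edges parallel to the real axis, each of length 1. A degenerate polygon
(a segment) is regarded as having two overlapping edges, both equal to the segment.\<close>
definition two_horizontal_unit_edges :: "complex set \<Rightarrow> bool" where
  "two_horizontal_unit_edges P \<longleftrightarrow>
     (aff_dim P = 2 \<and> (\<exists>E1 E2. E1 \<noteq> E2 \<and> is_edge_of E1 P \<and> is_edge_of E2 P \<and>
        horizontal_unit_segment E1 \<and> horizontal_unit_segment E2))
   \<or> (aff_dim P = 1 \<and> horizontal_unit_segment P)"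

end

theory Submission
  imports Defs
begin

text \<open>An edge of a polygon is an exposed face, so a polygon with a horizontal unit edge
  lies on one side of the edge's line and meets that line exactly in the edge. Two distinct
  horizontal unit edges therefore lie on different lines, one bounding the polygon from below
  and the other from above, and interpolating between them shows that every point of the
  polygon lies on a horizontal unit segment inside it. If consecutive shifts differ by at
  most 1, this makes the union of the translates equal to the Minkowski sum of the polygon
  with the real interval from the first to the last shift, which is convex. If instead
  some gap exceeds 1, then on the line of an edge the union contains the right end of one
  translate of the edge and the left end of the next one, but not their midpoint.\<close>

lemma mem_closed_segment_unit_horizontal:
  "x \<in> closed_segment a (a + 1) \<longleftrightarrow> Im x = Im a \<and> Re a \<le> Re x \<and> Re x \<le> Re a + 1"
  by (simp add: closed_segment_same_Im closed_segment_eq_real_ivl)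

lemma horizontal_unit_face_of_polyhedron:
  assumes "polyhedron P" and F: "closed_segment a (a + 1) face_of P"
  shows "P \<inter> {x. Im x = Im a} = closed_segment a (a + 1)"
    and "(\<forall>x\<in>P. Im a \<le> Im x) \<or> (\<forall>x\<in>P. Im x \<le> Im a)"
proof -
  obtain u b where side: "P \<subseteq> {x. u \<bullet> x \<le> b}"
    and Feq: "closed_segment a (a + 1) = P \<inter> {x. u \<bullet> x = b}"
    using F exposed_face_of_polyhedron[OF \<open>polyhedron P\<close>] unfolding exposed_face_of_def by blast
  have "u \<bullet> a = b" "u \<bullet> (a + 1) = b"
    using Feq ends_in_segment by blast+
  then have Reu: "Re u = 0" and ua: "b = Im u * Im a"
    by (simp_all add: inner_complex_def algebra_simps)
  have ux: "u \<bullet> x = Im u * Im x" for x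
    using Reu by (simp add: inner_complex_def)
  have "P \<inter> {x. Im x = Im a} = closed_segment a (a + 1) \<and>
        ((\<forall>x\<in>P. Im a \<le> Im x) \<or> (\<forall>x\<in>P. Im x \<le> Im a))"
  proof (cases "Im u = 0")
    case True
    then have "closed_segment a (a + 1) = P" using Feq ux ua by auto
    then show ?thesis by (auto simp: mem_closed_segment_unit_horizontal)
  next
    case False
    then have "P \<inter> {x. u \<bullet> x = b} = P \<inter> {x. Im x = Im a}" using ux ua by auto
    moreover have "(\<forall>x\<in>P. Im a \<le> Im x) \<or> (\<forall>x\<in>P. Im x \<le> Im a)"
      using False side ux ua by (cases "Im u > 0") (auto simp: mult_le_cancel_left)
    ultimately show ?thesis using Feq by simp
  qed
  then show "P \<inter> {x. Im x = Im a} = closed_segment a (a + 1)"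
    and "(\<forall>x\<in>P. Im a \<le> Im x) \<or> (\<forall>x\<in>P. Im x \<le> Im a)" by blast+
qed

definition horizontal_unit_chords :: "complex set \<Rightarrow> bool" where
  "horizontal_unit_chords P \<longleftrightarrow>
     (\<forall>p\<in>P. \<exists>q. p \<in> closed_segment q (q + 1) \<and> closed_segment q (q + 1) \<subseteq> P)"

lemma unit_chord_through_point:
  assumes "convex P" and chord: "closed_segment q (q + 1) \<subseteq> P" and "p \<in> P" "Im p = Im q"
  shows "\<exists>r. p \<in> closed_segment r (r + 1) \<and> closed_segment r (r + 1) \<subseteq> P"
proof -
  have qP: "q \<in> P" "q + 1 \<in> P" using chord ends_in_segment by blast+
  consider "Re p < Re q" | "Re q + 1 < Re p" | "p \<in> closed_segment q (q + 1)"
    using \<open>Im p = Im q\<close> by (force simp: mem_closed_segment_unit_horizontal)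
  then show ?thesis
  proof cases
    case 1
    then have "closed_segment p (p + 1) \<subseteq> closed_segment p (q + 1)"
      using \<open>Im p = Im q\<close>
      by (auto simp: subset_closed_segment closed_segment_same_Im closed_segment_eq_real_ivl)
    also have "\<dots> \<subseteq> P" using closed_segment_subset assms qP by blast
    finally show ?thesis using ends_in_segment by blast
  next
    case 2
    then have "closed_segment (p - 1) (p - 1 + 1) \<subseteq> closed_segment q p"
      using \<open>Im p = Im q\<close>
      by (auto simp: subset_closed_segment closed_segment_same_Im closed_segment_eq_real_ivl)
    also have "\<dots> \<subseteq> P" using closed_segment_subset assms qP by blast
    finally show ?thesis using ends_in_segment by (metis diff_add_cancel)
  next
    case 3
    then show ?thesis using chord by blast
  qed
qed

lemma unit_chord_at_height:
  assumes "convex P" and "closed_segment a (a + 1) \<subseteq> P" "closed_segment b (b + 1) \<subseteq> P"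
    and "Im a \<le> y" "y \<le> Im b"
  shows "\<exists>q. Im q = y \<and> closed_segment q (q + 1) \<subseteq> P"
proof -
  define l where "l = (y - Im a) / (Im b - Im a)"
  have l: "0 \<le> l" "l \<le> 1" using assms(4,5) by (auto simp: l_def divide_simps)
  define q where "q = (1 - l) *\<^sub>R a + l *\<^sub>R b"
  have "Im q = Im a + l * (Im b - Im a)" by (simp add: q_def algebra_simps)
  \<comment> \<open>if \<open>Im a = Im b\<close> then \<open>l = 0\<close>, since division by zero yields zero\<close>
  also have "\<dots> = y" using assms(4,5) by (cases "Im a = Im b") (auto simp: l_def)
  finally have "Im q = y" .
  have "q + 1 = (1 - l) *\<^sub>R (a + 1) + l *\<^sub>R (b + 1)"
    by (simp add: q_def scaleR_conv_of_real algebra_simps)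
  then have "q \<in> P" "q + 1 \<in> P"
    using assms(1-3) l ends_in_segment unfolding q_def by (metis convexD_alt subsetD)+
  then show ?thesis using \<open>Im q = y\<close> \<open>convex P\<close> closed_segment_subset by blast
qed

lemma horizontal_unit_chords_between_faces:
  assumes "polyhedron P"
    and Fa: "closed_segment a (a + 1) face_of P" and Fb: "closed_segment b (b + 1) face_of P"
    and "Im a < Im b"
  shows "horizontal_unit_chords P"
  unfolding horizontal_unit_chords_def
proof
  fix p assume "p \<in> P"
  have "convex P" using \<open>polyhedron P\<close> polyhedron_imp_convex by blast
  have subs: "closed_segment a (a + 1) \<subseteq> P" "closed_segment b (b + 1) \<subseteq> P"
    using Fa Fb face_of_imp_subset by blast+
  then have "a \<in> P" "b \<in> P" using ends_in_segment by blast+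
  then have "Im a \<le> Im p" "Im p \<le> Im b"
    using horizontal_unit_face_of_polyhedron(2)[OF \<open>polyhedron P\<close> Fa]
      horizontal_unit_face_of_polyhedron(2)[OF \<open>polyhedron P\<close> Fb] \<open>p \<in> P\<close> \<open>Im a < Im b\<close>
    by force+
  then obtain q where "Im q = Im p" "closed_segment q (q + 1) \<subseteq> P"
    using unit_chord_at_height[OF \<open>convex P\<close> subs] by metis
  then show "\<exists>q. p \<in> closed_segment q (q + 1) \<and> closed_segment q (q + 1) \<subseteq> P"
    using unit_chord_through_point[OF \<open>convex P\<close> _ \<open>p \<in> P\<close>] by metis
qed

lemma convex_polygon_horizontal_unit_chords:
  assumes "convex_polygon P" and "two_horizontal_unit_edges P"
  obtains a where "P \<inter> {x. Im x = Im a} = closed_segment a (a + 1)" and "horizontal_unit_chords P"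
proof -
  have "polyhedron P"
    using \<open>convex_polygon P\<close> polytope_imp_polyhedron unfolding convex_polygon_def by blast
  from \<open>two_horizontal_unit_edges P\<close> consider
      a b where "closed_segment a (a + 1) \<noteq> closed_segment b (b + 1)"
        "closed_segment a (a + 1) face_of P" "closed_segment b (b + 1) face_of P"
    | a where "P = closed_segment a (a + 1)"
    unfolding two_horizontal_unit_edges_def is_edge_of_def horizontal_unit_segment_def by blast
  then show thesis
  proof cases
    case (1 a b)
    note level_set = horizontal_unit_face_of_polyhedron(1)[OF \<open>polyhedron P\<close>]
    have "Im a \<noteq> Im b" using 1 level_set by metis
    then have "horizontal_unit_chords P"
      using horizontal_unit_chords_between_faces[OF \<open>polyhedron P\<close>] 1
      by (metis linorder_neqE_linordered_idom)
    then show thesis using that level_set 1 by blast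
  next
    case (2 a)
    then have "P \<inter> {x. Im x = Im a} = closed_segment a (a + 1)"
      by (auto simp: mem_closed_segment_unit_horizontal)
    moreover have "horizontal_unit_chords P"
      unfolding horizontal_unit_chords_def 2 by blast
    ultimately show thesis using that by blast
  qed
qed

lemma increasing_index_le:
  fixes t :: "nat \<Rightarrow> 'a::order"
  assumes inc: "\<And>i. 1 \<le> i \<Longrightarrow> i < m \<Longrightarrow> t i < t (i + 1)"
    and "1 \<le> j" "j \<le> k" "k \<le> m"
  shows "t j \<le> t k"
  using \<open>j \<le> k\<close> \<open>k \<le> m\<close>
proof (induction k rule: dec_induct)
  case (step k)
  then show ?case using inc[of k] \<open>1 \<le> j\<close> by force
qed simp

lemma last_index_below:
  fixes t :: "nat \<Rightarrow> 'a::linorder"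
  assumes "1 \<le> m" "t 1 \<le> s"
  obtains i where "1 \<le> i" "i \<le> m" "t i \<le> s" "i < m \<Longrightarrow> s < t (i + 1)"
proof -
  define I where "I = {i\<in>{1..m}. t i \<le> s}"
  have "finite I" "1 \<in> I" using assms by (auto simp: I_def)
  then have max: "Max I \<in> I" using Max_in by blast
  show thesis
  proof (rule that[of "Max I"])
    show "1 \<le> Max I" "Max I \<le> m" "t (Max I) \<le> s" using max by (auto simp: I_def)
    show "s < t (Max I + 1)" if "Max I < m"
    proof (rule ccontr)
      assume "\<not> s < t (Max I + 1)"
      then have "Max I + 1 \<in> I" using max that by (auto simp: I_def)
      then show False using Max_ge[OF \<open>finite I\<close>] by fastforce
    qed
  qed
qed

lemma shift_within_unit_chord:
  assumes "p \<in> closed_segment q (q + 1)" and chord: "closed_segment q (q + 1) \<subseteq> P"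
    and "\<tau> \<le> s" "s \<le> \<tau>'" "\<tau>' - \<tau> \<le> 1"
  shows "p + complex_of_real (s - \<tau>) \<in> P \<or> p + complex_of_real (s - \<tau>') \<in> P"
proof -
  have "p + complex_of_real (s - \<tau>) \<in> closed_segment q (q + 1) \<or>
        p + complex_of_real (s - \<tau>') \<in> closed_segment q (q + 1)"
    using assms(1,3-5) by (auto simp: mem_closed_segment_unit_horizontal)
  then show ?thesis using chord by blast
qed

lemma mem_union_translates:
  fixes c :: "'i \<Rightarrow> 'a::ab_group_add"
  shows "y \<in> (\<Union>i\<in>I. (\<lambda>x. x + c i) ` P) \<longleftrightarrow> (\<exists>i\<in>I. y - c i \<in> P)"
  by (auto simp: image_iff) (metis add_diff_cancel, metis diff_add_cancel)

lemma convex_union_translates: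
  fixes t :: "nat \<Rightarrow> real"
  assumes "convex P" and chords: "horizontal_unit_chords P"
    and inc: "\<And>i. 1 \<le> i \<Longrightarrow> i < m \<Longrightarrow> t i < t (i + 1)"
    and gaps: "\<forall>i\<in>{1..<m}. t (i + 1) - t i \<le> 1"
  shows "convex (\<Union>i\<in>{1..m}. (\<lambda>x. x + complex_of_real (t i)) ` P)"
    (is "convex ?U")
proof (cases "m = 0")
  case True
  then show ?thesis by simp
next
  case False
  let ?I = "complex_of_real ` {t 1..t m}"
  have "?U = (\<Union>p\<in>P. \<Union>y\<in>?I. {p + y})"
  proof (intro set_eqI iffI)
    fix z assume "z \<in> ?U"
    then obtain i where "i \<in> {1..m}" "z - complex_of_real (t i) \<in> P"
      unfolding mem_union_translates by blast
    moreover have "t i \<in> {t 1..t m}"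
      using increasing_index_le[where t = t and m = m, OF inc] \<open>i \<in> {1..m}\<close> by auto
    ultimately show "z \<in> (\<Union>p\<in>P. \<Union>y\<in>?I. {p + y})" by force
  next
    fix z assume "z \<in> (\<Union>p\<in>P. \<Union>y\<in>?I. {p + y})"
    then obtain p s where "p \<in> P" "s \<in> {t 1..t m}" and z: "z = p + complex_of_real s" by blast
    obtain i where i: "1 \<le> i" "i \<le> m" "t i \<le> s" "i < m \<Longrightarrow> s < t (i + 1)"
      using last_index_below[of m t s] False \<open>s \<in> {t 1..t m}\<close> by auto
    have "\<exists>j\<in>{1..m}. p + complex_of_real (s - t j) \<in> P"
    proof (cases "i = m")
      case True
      then show ?thesis using i \<open>p \<in> P\<close> \<open>s \<in> {t 1..t m}\<close> by (intro bexI[of _ m]) auto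
    next
      case False
      obtain q where "p \<in> closed_segment q (q + 1)" "closed_segment q (q + 1) \<subseteq> P"
        using chords \<open>p \<in> P\<close> unfolding horizontal_unit_chords_def by blast
      then have "p + complex_of_real (s - t i) \<in> P \<or> p + complex_of_real (s - t (i + 1)) \<in> P"
        using shift_within_unit_chord i False gaps by simp
      then show ?thesis using i False by force
    qed
    then show "z \<in> ?U" unfolding mem_union_translates z by (simp add: add_diff_eq)
  qed
  moreover have "convex ?I"
    by (intro convex_linear_image) (auto intro: bounded_linear.linear bounded_linear_of_real)
  ultimately show ?thesis using convex_sums[OF \<open>convex P\<close>] by metis
qed

lemma not_convex_union_translates:
  fixes t :: "nat \<Rightarrow> real"
  assumes level_set: "P \<inter> {x. Im x = Im a} = closed_segment a (a + 1)"
    and inc: "\<And>i. 1 \<le> i \<Longrightarrow> i < m \<Longrightarrow> t i < t (i + 1)"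
    and "1 \<le> i" "i < m" and gap: "t i + 1 < t (i + 1)"
  shows "\<not> convex (\<Union>i\<in>{1..m}. (\<lambda>x. x + complex_of_real (t i)) ` P)"
    (is "\<not> convex ?U")
proof
  assume "convex ?U"
  define c where "c = (1 + t i + t (i + 1)) / 2"
  have "a \<in> P" "a + 1 \<in> P" using level_set ends_in_segment by blast+
  have "a + 1 + complex_of_real (t i) \<in> ?U"
    unfolding mem_union_translates using \<open>a + 1 \<in> P\<close> \<open>1 \<le> i\<close> \<open>i < m\<close>
    by (intro bexI[of _ i]) auto
  moreover have "a + complex_of_real (t (i + 1)) \<in> ?U"
    unfolding mem_union_translates using \<open>a \<in> P\<close> \<open>i < m\<close>
    by (intro bexI[of _ "i + 1"]) simp_all
  ultimately have "midpoint (a + 1 + complex_of_real (t i)) (a + complex_of_real (t (i + 1))) \<in> ?U"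
    using \<open>convex ?U\<close> by (meson closed_segment_subset midpoint_in_closed_segment subsetD)
  moreover have "midpoint (a + 1 + complex_of_real (t i)) (a + complex_of_real (t (i + 1))) =
      a + complex_of_real c"
    by (simp add: midpoint_def c_def complex_eq_iff add_divide_distrib)
  ultimately have "a + complex_of_real c \<in> ?U" by simp
  then obtain j where j: "j \<in> {1..m}" and "a + complex_of_real c - complex_of_real (t j) \<in> P"
    unfolding mem_union_translates by blast
  then have "a + complex_of_real (c - t j) \<in> P \<inter> {x. Im x = Im a}"
    by (simp add: add_diff_eq)
  then have "0 \<le> c - t j" "c - t j \<le> 1"
    unfolding level_set by (simp_all add: mem_closed_segment_unit_horizontal)
  moreover have "t j \<le> t i \<or> t (i + 1) \<le> t j"
    using increasing_index_le[where t = t and m = m, OF inc] j \<open>i < m\<close>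
    by (cases "j \<le> i") simp_all
  ultimately show False using gap unfolding c_def by (auto simp: field_simps)
qed

theorem proposition2p9:
  fixes P :: "complex set" and t :: "nat \<Rightarrow> real" and m :: nat
  assumes "convex_polygon P"
    and "two_horizontal_unit_edges P"
    and "\<And>i. 1 \<le> i \<Longrightarrow> i < m \<Longrightarrow> t i < t (i + 1)"
  shows "(\<forall>i\<in>{1..<m}. t (i + 1) - t i \<le> 1) \<longleftrightarrow>
         convex (\<Union>i\<in>{1..m}. (\<lambda>x. x + complex_of_real (t i)) ` P)"
proof -
  obtain a where level_set: "P \<inter> {x. Im x = Im a} = closed_segment a (a + 1)"
    and chords: "horizontal_unit_chords P"
    using convex_polygon_horizontal_unit_chords[OF assms(1,2)] by blast
  have "convex P"
    using assms(1) polytope_imp_convex unfolding convex_polygon_def by blast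
  show ?thesis
  proof
    assume "\<forall>i\<in>{1..<m}. t (i + 1) - t i \<le> 1"
    then show "convex (\<Union>i\<in>{1..m}. (\<lambda>x. x + complex_of_real (t i)) ` P)"
      using convex_union_translates[where t = t and m = m, OF \<open>convex P\<close> chords assms(3)]
      by blast
  next
    assume "convex (\<Union>i\<in>{1..m}. (\<lambda>x. x + complex_of_real (t i)) ` P)"
    then show "\<forall>i\<in>{1..<m}. t (i + 1) - t i \<le> 1"
      using not_convex_union_translates[where t = t and m = m, OF level_set assms(3)]
      by force
  qed
qed

end
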